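(* Let $0<\alpha_1,\alpha_2\leq 1$, $\theta=\frac{\alpha_2-\alpha_1}{\alpha_2+\alpha_1}$, $c=e^{\pi i\theta}$, $G(z)=\left(\frac{1+cz}{1-z}\right)^{(\alpha_1+\alpha_2)/2}$ on $\Delta$ (principal branch, $G(0)=1$), and $\widetilde{G}(z)=\int_0^z\frac{G(t)-1}{t}\,dt$. If $f\in\mathcal{S}^*_t(\alpha_1,\alpha_2)$, then $$\frac{f(z)}{z}\prec\exp\widetilde{G}(z)\quad(z\in\Delta).$$
   Context: $\Delta=\{z\in\mathbb{C}:|z|<1\}$. $\mathcal{S}^*_t(\alpha_1,\alpha_2)$ denotes the class of functions $f$ analytic in $\Delta$ with $f(0)=0=f'(0)-1$ satisfying $-\frac{\pi\alpha_1}{2}<\arg\left\{\frac{zf'(z)}{f(z)}\right\}<\frac{\pi\alpha_2}{2}$ for all $z\in\Delta$. For analytic $f,g$ in $\Delta$, $f\prec g$ means there is an analytic $w$ in $\Delta$ with $w(0)=0$, $|w(z)|<1$ and $f=g\circ w$. *)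

theory Defs
  imports "HOL-Complex_Analysis.Complex_Analysis"
begin

text \<open>The class S*_t(a1,a2): normalized analytic functions on the unit disc with
  -pi a1/2 < arg (z f'(z)/f(z)) < pi a2/2.  At z = 0 the quotient z f'(z)/f(z) is
  understood as its limit 1 (arg 0), so the condition is imposed for z \<noteq> 0,
  where the quotient must be a well-defined nonzero number.\<close>
definition strongly_starlike_t :: "real \<Rightarrow> real \<Rightarrow> (complex \<Rightarrow> complex) \<Rightarrow> bool" where
  "strongly_starlike_t a1 a2 f \<longleftrightarrow>
     f holomorphic_on ball 0 1 \<and> f 0 = 0 \<and> deriv f 0 = 1 \<and>
     (\<forall>z\<in>ball 0 1. z \<noteq> 0 \<longrightarrow>
        f z \<noteq> 0 \<and> deriv f z \<noteq> 0 \<and>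
        - (pi * a1 / 2) < Arg (z * deriv f z / f z) \<and>
        Arg (z * deriv f z / f z) < pi * a2 / 2)"

definition subordinate :: "(complex \<Rightarrow> complex) \<Rightarrow> (complex \<Rightarrow> complex) \<Rightarrow> bool" where
  "subordinate f g \<longleftrightarrow>
     (\<exists>w. w holomorphic_on ball 0 1 \<and> w 0 = 0 \<and> (\<forall>z\<in>ball 0 1. norm (w z) < 1) \<and>
          (\<forall>z\<in>ball 0 1. f z = g (w z)))"

definition thetaG :: "real \<Rightarrow> real \<Rightarrow> real" where
  "thetaG a1 a2 = (a2 - a1) / (a2 + a1)"

definition cG :: "real \<Rightarrow> real \<Rightarrow> complex" where
  "cG a1 a2 = exp (complex_of_real pi * \<i> * complex_of_real (thetaG a1 a2))"

definition G :: "real \<Rightarrow> real \<Rightarrow> complex \<Rightarrow> complex" where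
  "G a1 a2 z = ((1 + cG a1 a2 * z) / (1 - z)) powr complex_of_real ((a1 + a2) / 2)"

text \<open>G~(z) = integral from 0 to z of (G(t) - 1)/t dt (along the segment; the
  integrand has a removable singularity at 0).\<close>
definition Gt :: "real \<Rightarrow> real \<Rightarrow> complex \<Rightarrow> complex" where
  "Gt a1 a2 z = contour_integral (linepath 0 z) (\<lambda>t. (G a1 a2 t - 1) / t)"

end

theory Submission
  imports Defs
begin

(*
  Write f(z)/z = exp Q(z) with Q(0) = 0.  Then p = 1 + z Q' = z f'/f takes its values in the sector
  S = {-pi a1/2 < arg < pi a2/2}, while z G~' = G - 1.  The map G is the Moebius map
  z -> (1 + c z)/(1 - z) of the disc onto the half-plane |arg u - pi theta/2| < pi/2, followed by
  the power (a1 + a2)/2; so G maps the disc conformally onto the convex sector S, p = G o w with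
  |w(z)| <= |z| by Schwarz's lemma, and S is starlike with respect to 1 = G(0).

  G~ is univalent by the Noshiro-Warschawski criterion: with u = (1 + c z)/(1 - z), the quotient
  (G(z) - 1)/z equals (u + c) (u^beta - 1)/(u - 1), the mean of beta (u + c) v^(beta - 1) over the
  segment v in [1, u], and each of these terms has argument within pi/2 of pi theta/2.

  Finally Q is subordinate to G~ by Jack's lemma: if |G~^-1 (Q z)| first exceeds |z| at z0, then
  zeta0 = G~^-1 (Q z0) satisfies z0 Q'(z0) = m zeta0 G~'(zeta0) with m >= 1, i.e.
  G(zeta0) = 1 + (p(z0) - 1)/m.  As S is starlike, this is a value of G at a point of modulus at
  most |z0|, so |zeta0| <= |z0| by injectivity of G, a contradiction.  A continuity argument shows
  that G~^-1 o Q is defined on the whole disc.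
*)

section \<open>Univalence, primitives and logarithms\<close>

lemma Re_integral_pos:
  fixes f :: "real \<Rightarrow> complex"
  assumes cont: "continuous_on {0..1} f" and pos: "\<And>s. s \<in> {0..1} \<Longrightarrow> 0 < Re (f s)"
    and integral: "(f has_integral I) {0..1}"
  shows "0 < Re I"
proof -
  have "continuous_on {0..1} (\<lambda>s. Re (f s))" using cont by (intro continuous_intros)
  from continuous_attains_inf[OF compact_Icc _ this]
  obtain s0 where s0: "s0 \<in> {0..1}" "\<And>s. s \<in> {0..1} \<Longrightarrow> Re (f s0) \<le> Re (f s)"
    by fastforce
  have Re_integral: "((\<lambda>s. Re (f s)) has_integral Re I) {0..1}"
    using has_integral_linear[OF integral bounded_linear_Re] by (simp add: o_def)
  have "((\<lambda>s::real. Re (f s0)) has_integral Re (f s0)) {0..1}"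
    using has_integral_const_real[of "Re (f s0)" "0::real" 1] by auto
  then have "Re (f s0) \<le> Re I" using Re_integral s0(2) by (rule has_integral_le)
  with pos[OF s0(1)] show ?thesis by simp
qed

lemma Noshiro_Warschawski:
  assumes S: "convex S" "open S" and holf: "f holomorphic_on S"
    and pos: "\<And>z. z \<in> S \<Longrightarrow> 0 < Re (a * deriv f z)"
  shows "inj_on f S"
proof (rule inj_onI, rule ccontr)
  fix z1 z2 assume z: "z1 \<in> S" "z2 \<in> S" "f z1 = f z2" "z1 \<noteq> z2"
  let ?g = "\<lambda>x. a * deriv f (linepath z1 z2 x)"
  have seg: "closed_segment z1 z2 \<subseteq> S"
    using S(1) z(1,2) by (simp add: closed_segment_subset)
  have lin: "linepath z1 z2 x \<in> S" if "x \<in> {0..1}" for x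
    using seg linepath_in_path[OF that] by blast
  have "(f has_field_derivative deriv f w) (at w within S)" if "w \<in> S" for w
    using holomorphic_derivI[OF holf S(2) that] by (rule has_field_derivative_at_within)
  from contour_integral_primitive[OF this valid_path_linepath, of z1 z2] seg
  have "(deriv f has_contour_integral f z2 - f z1) (linepath z1 z2)" by simp
  then have "((\<lambda>x. deriv f (linepath z1 z2 x) * (z2 - z1)) has_integral 0) {0..1}"
    using z(3) by (simp add: has_contour_integral_linepath)
  from has_integral_mult_right[OF this, of "a / (z2 - z1)"]
  have integral: "(?g has_integral 0) {0..1}" using z(4) by simp
  have "continuous_on S (deriv f)"
    using holf S(2) by (intro holomorphic_on_imp_continuous_on holomorphic_deriv)
  then have "continuous_on {0..1} ?g"
    using lin by (intro continuous_intros continuous_on_compose2[OF _ continuous_on_linepath]) auto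
  from Re_integral_pos[OF this _ integral] have "0 < Re (0::complex)"
    using pos lin by blast
  then show False by simp
qed

lemma contour_integral_quotient_has_field_derivative:
  assumes holh: "h holomorphic_on ball 0 r" and h0: "h 0 = 0" and z: "z \<in> ball 0 r"
  shows "((\<lambda>z. contour_integral (linepath 0 z) (\<lambda>t. h t / t)) has_field_derivative
           (if z = 0 then deriv h 0 else h z / z)) (at z)"
proof -
  define q where "q t = (if t = 0 then deriv h 0 else h t / t)" for t
  have r: "0 < r" using z norm_ge_zero[of z] unfolding mem_ball dist_0_norm by linarith
  have "q holomorphic_on ball 0 r"
    by (rule pole_theorem_open_0[OF holh open_ball, where a = 0]) (auto simp: q_def h0)
  from holomorphic_convex_primitive'[OF convex_ball open_ball this]
  obtain \<Phi> where \<Phi>: "\<And>w. w \<in> ball 0 r \<Longrightarrow> (\<Phi> has_field_derivative q w) (at w within ball 0 r)"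
    by blast
  have integral: "contour_integral (linepath 0 w) (\<lambda>t. h t / t) = \<Phi> w - \<Phi> 0"
    if w: "w \<in> ball 0 r" for w
  proof (cases "w = 0")
    case False
    have "closed_segment 0 w \<subseteq> ball 0 r"
      using w r by (intro closed_segment_subset) auto
    then have "(q has_contour_integral \<Phi> w - \<Phi> 0) (linepath 0 w)"
      using contour_integral_primitive[OF \<Phi> valid_path_linepath] by simp
    moreover have "contour_integral (linepath 0 w) (\<lambda>t. h t / t) = contour_integral (linepath 0 w) q"
      by (rule contour_integral_spike_finite_simple_path[of "{0}"]) (use False in \<open>auto simp: q_def\<close>)
    ultimately show ?thesis by (simp add: contour_integral_unique)
  qed simp
  have "(\<Phi> has_field_derivative q z) (at z)"
    using \<Phi>[OF z] by (simp add: at_within_open[OF z open_ball])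
  then have "((\<lambda>w. \<Phi> w - \<Phi> 0) has_field_derivative q z) (at z)"
    by (auto intro!: derivative_eq_intros)
  then show ?thesis
    unfolding q_def[symmetric]
    by (rule has_field_derivative_transform_within_open[OF _ open_ball z]) (simp add: integral)
qed

lemma holomorphic_log_of_quotient:
  fixes f :: "complex \<Rightarrow> complex"
  assumes holf: "f holomorphic_on ball 0 1" and f0: "f 0 = 0" and f'0: "deriv f 0 = 1"
    and nz: "\<And>z. z \<in> ball 0 1 \<Longrightarrow> z \<noteq> 0 \<Longrightarrow> f z \<noteq> 0"
  obtains Q where "Q holomorphic_on ball 0 1" "Q 0 = 0"
    "\<And>z. z \<in> ball 0 1 \<Longrightarrow> exp (Q z) = (if z = 0 then 1 else f z / z)"
    "\<And>z. z \<in> ball 0 1 \<Longrightarrow> z \<noteq> 0 \<Longrightarrow> 1 + z * deriv Q z = z * deriv f z / f z"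
proof -
  obtain F where holF: "F holomorphic_on ball 0 1" and fF: "\<And>z. norm z < 1 \<Longrightarrow> f z = z * F z"
    and F0: "deriv f 0 = F 0"
    using Schwarz3[OF holf f0] by blast
  have F: "F z = (if z = 0 then 1 else f z / z)" if "z \<in> ball 0 1" for z
    using fF[of z] that F0 f'0 by auto
  have "F z \<noteq> 0" if "z \<in> ball 0 1" for z using F[OF that] nz[OF that] by auto
  then obtain g where holg: "g holomorphic_on ball 0 1" and g: "\<And>z. z \<in> ball 0 1 \<Longrightarrow> exp (g z) = F z"
    using holomorphic_logarithm_exists[OF convex_ball open_ball holF, of 0] by auto
  define Q where "Q z = g z - g 0" for z
  have eQ: "exp (Q z) = F z" if "z \<in> ball 0 1" for z
    using g[OF that] g[of 0] F[of 0] by (simp add: Q_def exp_diff)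
  have holQ: "Q holomorphic_on ball 0 1" unfolding Q_def[abs_def] using holg by (intro holomorphic_intros)
  show ?thesis
  proof (rule that[OF holQ])
    show "Q 0 = 0" by (simp add: Q_def)
    show "exp (Q z) = (if z = 0 then 1 else f z / z)" if "z \<in> ball 0 1" for z
      using eQ[OF that] F[OF that] by simp
    fix z :: complex assume z: "z \<in> ball 0 1" and z0: "z \<noteq> 0"
    have "((\<lambda>w. w * exp (Q w)) has_field_derivative exp (Q z) + z * (exp (Q z) * deriv Q z)) (at z)"
      using holomorphic_derivI[OF holQ open_ball z] by (auto intro!: derivative_eq_intros)
    then have "(f has_field_derivative exp (Q z) + z * (exp (Q z) * deriv Q z)) (at z)"
      by (rule has_field_derivative_transform_within_open[OF _ open_ball z]) (simp add: eQ fF)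
    then have "deriv f z = exp (Q z) * (1 + z * deriv Q z)" by (simp add: DERIV_imp_deriv algebra_simps)
    moreover have "f z = z * exp (Q z)" using z by (simp add: eQ fF)
    ultimately show "1 + z * deriv Q z = z * deriv f z / f z" using z0 by simp
  qed
qed

lemma subordinate_compose:
  assumes "subordinate f g" and "\<And>z. z \<in> ball 0 1 \<Longrightarrow> F z = h (f z)"
  shows "subordinate F (\<lambda>z. h (g z))"
  using assms unfolding subordinate_def by metis

section \<open>Jack's lemma and subordination\<close>

lemma norm_le_by_maximum_on_sphere:
  fixes W :: "complex \<Rightarrow> complex"
  assumes holW: "W holomorphic_on ball 0 r" and W0: "W 0 = 0" and \<rho>: "0 < \<rho>" "\<rho> < r"
    and bound: "\<And>w. norm w = \<rho> \<Longrightarrow> norm (W w) \<le> B" and z: "norm z \<le> \<rho>"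
  shows "norm (W z) \<le> B * norm z / \<rho>"
proof -
  obtain h where holh: "h holomorphic_on ball 0 r" and Wh: "\<And>z. norm z < r \<Longrightarrow> W z = z * h z"
    using Schwarz3[OF holW W0] by blast
  have "norm (h z) \<le> B / \<rho>"
  proof (rule maximum_modulus_frontier[of h "cball 0 \<rho>"])
    show "h holomorphic_on interior (cball 0 \<rho>)"
      by (rule holomorphic_on_subset[OF holh]) (use \<rho> in auto)
    show "continuous_on (closure (cball 0 \<rho>)) h"
      by (rule continuous_on_subset[OF holomorphic_on_imp_continuous_on[OF holh]]) (use \<rho> in auto)
    fix w :: complex assume "w \<in> frontier (cball 0 \<rho>)"
    then have w: "norm w = \<rho>" using \<rho> by simp
    then show "norm (h w) \<le> B / \<rho>"
      using bound[OF w] Wh[of w] \<rho> by (simp add: norm_mult pos_le_divide_eq mult.commute)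
  qed (use z in \<open>auto\<close>)
  then have "norm z * norm (h z) \<le> norm z * (B / \<rho>)" by (rule mult_left_mono) simp
  also have "norm z * norm (h z) = norm (W z)" using Wh[of z] z \<rho> by (simp add: norm_mult)
  finally show ?thesis by (simp add: mult.commute)
qed

lemma Re_deriv_at_boundary_max:
  fixes H :: "complex \<Rightarrow> complex"
  assumes DH: "(H has_field_derivative D) (at 0)"
    and le: "\<And>s. Re s \<le> 0 \<Longrightarrow> Re (H s) \<le> Re (H 0)"
  shows "Im D = 0" "0 \<le> Re D"
proof -
  have "(H has_field_derivative D) (at ((\<lambda>y. \<i> * y) (of_real 0)))" using DH by simp
  moreover have "((\<lambda>y. \<i> * y) has_field_derivative \<i>) (at (of_real 0))"
    by (auto intro!: derivative_eq_intros)
  ultimately have "((\<lambda>y. H (\<i> * y)) has_field_derivative D * \<i>) (at (of_real 0))"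
    by (rule DERIV_chain2)
  from has_field_derivative_Re[OF has_vector_derivative_real_field[OF this]]
  have "((\<lambda>y. Re (H (\<i> * of_real y))) has_real_derivative Re (D * \<i>)) (at 0)" by simp
  moreover have "Re (H (\<i> * of_real y)) \<le> Re (H (\<i> * of_real 0))" for y
    using le[of "\<i> * of_real y"] by simp
  ultimately have "Re (D * \<i>) = 0" by (intro DERIV_local_max[of _ _ _ 1]) auto
  then show "Im D = 0" by simp
  from has_field_derivative_Re[OF has_vector_derivative_real_field[of H D 0]] DH
  have radial: "((\<lambda>x. Re (H (of_real x))) has_real_derivative Re D) (at 0)" by simp
  show "0 \<le> Re D"
  proof (rule ccontr)
    assume "\<not> 0 \<le> Re D"
    then obtain d where d: "0 < d"
      "\<And>h. 0 < h \<Longrightarrow> h < d \<Longrightarrow> Re (H (of_real 0)) < Re (H (of_real (0 - h)))"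
      using DERIV_neg_dec_left[OF radial] by force
    have "Re (H (of_real 0)) < Re (H (of_real (0 - d / 2)))" using d(2)[of "d / 2"] d(1) by simp
    with le[of "of_real (0 - d / 2)"] d(1) show False by simp
  qed
qed

lemma Jack_lemma:
  fixes W :: "complex \<Rightarrow> complex"
  assumes holW: "W holomorphic_on ball 0 r" and W0: "W 0 = 0" and r1: "0 < r1" "r1 < r"
    and z0: "norm z0 = r1" and max: "\<And>z. norm z \<le> r1 \<Longrightarrow> norm (W z) \<le> norm (W z0)"
    and nz: "W z0 \<noteq> 0"
  shows "Im (z0 * deriv W z0 / W z0) = 0" "1 \<le> Re (z0 * deriv W z0 / W z0)"
proof -
  define H where "H s = W (z0 * exp s) * exp (- s) / W z0" for s
  have "z0 \<in> ball 0 r" using z0 r1 by simp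
  from holomorphic_derivI[OF holW open_ball this]
  have "(W has_field_derivative deriv W z0) (at (z0 * exp 0))" by simp
  moreover have "((\<lambda>s. z0 * exp s) has_field_derivative z0 * exp 0) (at 0)"
    by (auto intro!: derivative_eq_intros)
  ultimately have "((\<lambda>s. W (z0 * exp s)) has_field_derivative deriv W z0 * (z0 * exp 0)) (at 0)"
    by (rule DERIV_chain2)
  moreover have "((\<lambda>s. exp (- s)) has_field_derivative exp (- 0) * (- 1)) (at (0::complex))"
    by (auto intro!: derivative_eq_intros)
  ultimately have "(H has_field_derivative (deriv W z0 * (z0 * exp 0) * exp (- 0)
      + exp (- 0) * (- 1) * W (z0 * exp 0)) / W z0) (at 0)"
    unfolding H_def[abs_def] by (intro DERIV_cdivide DERIV_mult)
  then have DH: "(H has_field_derivative z0 * deriv W z0 / W z0 - 1) (at 0)"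
    using nz by (simp add: field_simps)
  have "Re (H s) \<le> Re (H 0)" if s: "Re s \<le> 0" for s
  proof -
    have n: "norm (z0 * exp s) = r1 * exp (Re s)" using z0 by (simp add: norm_mult)
    also have "\<dots> \<le> r1" using s r1 by (simp add: mult_le_cancel_left1)
    finally have "norm (W (z0 * exp s)) \<le> norm (W z0) * norm (z0 * exp s) / r1"
      using norm_le_by_maximum_on_sphere[OF holW W0 r1, of "norm (W z0)"] max by simp
    then have "norm (W (z0 * exp s)) \<le> norm (W z0) * exp (Re s)" using n r1 by simp
    then have "norm (H s) \<le> 1"
      using nz by (simp add: H_def norm_mult norm_divide exp_minus field_simps)
    then show ?thesis using complex_Re_le_cmod[of "H s"] nz by (simp add: H_def)
  qed
  from Re_deriv_at_boundary_max[OF DH this]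
  show "Im (z0 * deriv W z0 / W z0) = 0" "1 \<le> Re (z0 * deriv W z0 / W z0)" by simp_all
qed

lemma ball_enlarge_in_open:
  fixes U :: "'a::euclidean_space set"
  assumes "open U" "cball 0 R \<subseteq> U" "0 \<le> R"
  obtains \<epsilon> where "0 < \<epsilon>" "ball 0 (R + \<epsilon>) \<subseteq> U"
proof -
  from compact_subset_open_imp_ball_epsilon_subset[OF compact_cball assms(1,2)]
  obtain \<epsilon> where \<epsilon>: "0 < \<epsilon>" "(\<Union>x\<in>cball 0 R. ball x \<epsilon>) \<subseteq> U" by blast
  have "ball 0 (R + \<epsilon>) \<subseteq> U"
  proof
    fix y :: 'a assume y: "y \<in> ball 0 (R + \<epsilon>)"
    define x where "x = (R / (R + \<epsilon>)) *\<^sub>R y"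
    have "norm x = R / (R + \<epsilon>) * norm y" using assms(3) \<epsilon> by (simp add: x_def)
    also have "\<dots> \<le> R / (R + \<epsilon>) * (R + \<epsilon>)"
      using y assms(3) \<epsilon> by (intro mult_left_mono) auto
    finally have "x \<in> cball 0 R" using \<epsilon> assms(3) by simp
    have "\<epsilon> / (R + \<epsilon>) = 1 - R / (R + \<epsilon>)" using assms(3) \<epsilon> by (simp add: field_simps)
    then have "y - x = (\<epsilon> / (R + \<epsilon>)) *\<^sub>R y" by (simp add: x_def scaleR_diff_left)
    then have "norm (y - x) = \<epsilon> / (R + \<epsilon>) * norm y" using assms(3) \<epsilon> by simp
    also have "\<dots> < \<epsilon> / (R + \<epsilon>) * (R + \<epsilon>)"
      using y assms(3) \<epsilon> by (intro mult_strict_left_mono) auto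
    finally have "y \<in> ball x \<epsilon>" using \<epsilon> assms(3) by (simp add: dist_norm norm_minus_commute)
    with \<open>x \<in> cball 0 R\<close> show "y \<in> U" using \<epsilon>(2) by blast
  qed
  with \<epsilon>(1) show ?thesis by (rule that)
qed

lemma ball_subset_open_by_continuity:
  fixes U :: "'a::euclidean_space set"
  assumes U: "open U" "0 \<in> U"
    and sphere: "\<And>R. 0 < R \<Longrightarrow> R < r \<Longrightarrow> ball 0 R \<subseteq> U \<Longrightarrow> sphere 0 R \<subseteq> U"
  shows "ball 0 r \<subseteq> U"
proof (cases "0 < r")
  case True
  define A where "A = {\<rho>. 0 \<le> \<rho> \<and> \<rho> \<le> r \<and> ball 0 \<rho> \<subseteq> U}"
  define R where "R = Sup A"
  have A0: "0 \<in> A" using True by (simp add: A_def)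
  have bdd: "bdd_above A" by (rule bdd_aboveI[of _ r]) (simp add: A_def)
  have R0: "0 \<le> R" unfolding R_def by (rule cSup_upper[OF A0 bdd])
  have Rr: "R \<le> r" unfolding R_def using A0 by (intro cSup_least) (auto simp: A_def)
  have ballR: "ball 0 R \<subseteq> U"
  proof
    fix z :: 'a assume "z \<in> ball 0 R"
    then have "norm z < Sup A" by (simp add: R_def)
    then obtain \<rho> where "\<rho> \<in> A" "norm z < \<rho>" using less_cSup_iff[OF _ bdd] A0 by blast
    then show "z \<in> U" by (auto simp: A_def)
  qed
  have "R = r"
  proof (rule ccontr)
    assume "R \<noteq> r"
    with Rr have "R < r" by simp
    have "cball 0 R \<subseteq> U"
    proof (cases "R = 0")
      case False
      then have "sphere 0 R \<subseteq> U" using sphere R0 \<open>R < r\<close> ballR by simp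
      moreover have "cball 0 R = ball 0 R \<union> sphere 0 R" by auto
      ultimately show ?thesis using ballR by blast
    qed (use U in simp)
    then obtain \<epsilon> where "0 < \<epsilon>" "ball 0 (R + \<epsilon>) \<subseteq> U"
      using ball_enlarge_in_open[OF U(1) _ R0] by blast
    then have "min (R + \<epsilon>) r \<in> A" using R0 \<open>R < r\<close> by (auto simp: A_def)
    then have "min (R + \<epsilon>) r \<le> R" unfolding R_def by (rule cSup_upper[OF _ bdd])
    then show False using \<open>R < r\<close> \<open>0 < \<epsilon>\<close> by simp
  qed
  then show ?thesis using ballR by simp
qed (simp add: ball_empty)

context
  fixes Q k p :: "complex \<Rightarrow> complex"
  assumes holQ: "Q holomorphic_on ball 0 1" and Q0: "Q 0 = 0"
    and holk: "k holomorphic_on ball 0 1" and k0: "k 0 = 0" and inj_k: "inj_on k (ball 0 1)"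
    and deriv_k: "\<And>\<zeta>. \<zeta> \<in> ball 0 1 \<Longrightarrow> \<zeta> * deriv k \<zeta> = p \<zeta> - 1"
    and deriv_Q: "\<And>z. z \<in> ball 0 1 \<Longrightarrow> \<exists>\<eta>. norm \<eta> \<le> norm z \<and> z * deriv Q z = p \<eta> - 1"
    and starlike: "\<And>\<zeta> t. \<zeta> \<in> ball 0 1 \<Longrightarrow> 0 < t \<Longrightarrow> t \<le> 1 \<Longrightarrow>
                     \<exists>\<eta>. norm \<eta> \<le> norm \<zeta> \<and> p \<eta> = 1 + of_real t * (p \<zeta> - 1)"
    and inj_p: "inj_on p (ball 0 1)"
begin

lemma norm_le_of_Jack_equation:
  assumes z0: "z0 \<in> ball 0 1" and \<zeta>0: "\<zeta>0 \<in> ball 0 1" and m: "1 \<le> m"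
    and eq: "z0 * deriv Q z0 = of_real m * (\<zeta>0 * deriv k \<zeta>0)"
  shows "norm \<zeta>0 \<le> norm z0"
proof -
  obtain \<eta>1 where \<eta>1: "norm \<eta>1 \<le> norm z0" "z0 * deriv Q z0 = p \<eta>1 - 1"
    using deriv_Q[OF z0] by blast
  then have \<eta>1_ball: "\<eta>1 \<in> ball 0 1" using z0 by simp
  obtain \<eta> where \<eta>: "norm \<eta> \<le> norm \<eta>1" "p \<eta> = 1 + of_real (1 / m) * (p \<eta>1 - 1)"
    using starlike[OF \<eta>1_ball, of "1 / m"] m by auto
  have "p \<eta> = 1 + of_real (1 / m) * (of_real m * (p \<zeta>0 - 1))"
    using \<eta>(2) \<eta>1(2) eq deriv_k[OF \<zeta>0] by simp
  also have "\<dots> = p \<zeta>0" using m by (simp add: mult.assoc[symmetric] of_real_mult[symmetric])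
  finally have "\<eta> = \<zeta>0" using inj_p \<zeta>0 \<eta>(1) \<eta>1_ball by (auto dest: inj_onD)
  then show ?thesis using \<eta>(1) \<eta>1(1) by simp
qed

lemma norm_le_by_Jack_lemma:
  assumes r: "r \<le> 1" and holW: "W holomorphic_on ball 0 r" and W0: "W 0 = 0"
    and lift: "\<And>z. z \<in> ball 0 r \<Longrightarrow> W z \<in> ball 0 1 \<and> k (W z) = Q z"
    and z: "z \<in> ball 0 r"
  shows "norm (W z) \<le> norm z"
proof (rule ccontr)
  assume bad: "\<not> norm (W z) \<le> norm z"
  define r1 where "r1 = norm z"
  have r1: "0 < r1" "r1 < r" using bad W0 z by (auto simp: r1_def)
  have sub: "ball 0 r1 \<subseteq> ball 0 r" and ne: "ball 0 r1 \<noteq> {}" using r1 by auto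
  have "continuous_on (closure (ball 0 r1)) W"
    by (rule continuous_on_subset[OF holomorphic_on_imp_continuous_on[OF holW]]) (use r1 in auto)
  from Schwarz1[OF holomorphic_on_subset[OF holW sub] this open_ball connected_ball bounded_ball ne]
  obtain z0 where "z0 \<in> frontier (ball 0 r1)"
    and "\<And>w. w \<in> closure (ball 0 r1) \<Longrightarrow> norm (W w) \<le> norm (W z0)"
    by blast
  then have z0: "norm z0 = r1" and max: "\<And>w. norm w \<le> r1 \<Longrightarrow> norm (W w) \<le> norm (W z0)"
    using r1 by auto
  have r1_less: "r1 < norm (W z0)" using max[of z] bad by (simp add: r1_def)
  then have Wz0: "W z0 \<noteq> 0" using r1 by auto
  define m where "m = z0 * deriv W z0 / W z0"
  have m: "m = of_real (Re m)" "1 \<le> Re m"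
    using Jack_lemma[OF holW W0 r1 z0 max Wz0] by (simp_all add: m_def complex_eq_iff)
  have z0_ball: "z0 \<in> ball 0 r" using z0 r1 by simp
  have W_ball: "W z0 \<in> ball 0 1" using lift[OF z0_ball] by simp
  from DERIV_chain2[OF holomorphic_derivI[OF holk open_ball W_ball]
      holomorphic_derivI[OF holW open_ball z0_ball]]
  have "(Q has_field_derivative deriv k (W z0) * deriv W z0) (at z0)"
    by (rule has_field_derivative_transform_within_open[OF _ open_ball z0_ball]) (simp add: lift)
  then have eq: "z0 * deriv Q z0 = of_real (Re m) * (W z0 * deriv k (W z0))"
    using Wz0 m(1) by (simp add: DERIV_imp_deriv m_def field_simps)
  have "z0 \<in> ball 0 1" using z0_ball r by simp
  from norm_le_of_Jack_equation[OF this W_ball m(2) eq] have "norm (W z0) \<le> r1" using z0 by simp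
  with r1_less show False by simp
qed

lemma Q_mem_image_cball:
  assumes R: "0 < R" "R < 1" and inner: "\<And>w. w \<in> ball 0 R \<Longrightarrow> Q w \<in> k ` cball 0 R"
    and z: "norm z = R"
  shows "Q z \<in> k ` cball 0 R"
proof -
  have "continuous_on (cball 0 R) k"
    by (rule continuous_on_subset[OF holomorphic_on_imp_continuous_on[OF holk]]) (use R in auto)
  then have closed: "closed (k ` cball 0 R)"
    by (intro compact_imp_closed compact_continuous_image compact_cball)
  have "eventually (\<lambda>t. Q (of_real t * z) \<in> k ` cball 0 R) (at_left (1::real))"
    using eventually_at_left_real[OF zero_less_one]
  proof (rule eventually_mono)
    fix t :: real assume "t \<in> {0<..<1}"
    then have "of_real t * z \<in> ball 0 R" using z R by (simp add: norm_mult)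
    then show "Q (of_real t * z) \<in> k ` cball 0 R" by (rule inner)
  qed
  moreover have "((\<lambda>t. Q (of_real t * z)) \<longlongrightarrow> Q z) (at_left (1::real))"
  proof (rule isCont_tendsto_compose[where g = Q])
    show "isCont Q z" using holomorphic_on_imp_continuous_on[OF holQ] z R
      by (simp add: continuous_on_eq_continuous_at)
    have "((\<lambda>t. of_real t * z) \<longlongrightarrow> of_real 1 * z) (at_left (1::real))"
      by (intro tendsto_intros)
    then show "((\<lambda>t. of_real t * z) \<longlongrightarrow> z) (at_left (1::real))" by simp
  qed
  ultimately show ?thesis by (rule Lim_in_closed_set[OF closed _ trivial_limit_at_left_real])
qed

lemma image_subset_by_Jack_lemma: "Q ` ball 0 1 \<subseteq> k ` ball 0 1"
proof -
  obtain kinv where holkinv: "kinv holomorphic_on k ` ball 0 1"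
    and "\<And>z. z \<in> ball 0 1 \<Longrightarrow> deriv k z * deriv kinv (k z) = 1"
    and kinv: "\<And>z. z \<in> ball 0 1 \<Longrightarrow> kinv (k z) = z"
    by (rule holomorphic_has_inverse[OF holk open_ball inj_k]) blast
  define U where "U = ball 0 1 \<inter> Q -` k ` ball 0 1"
  have "open U" unfolding U_def
    by (rule continuous_open_preimage[OF holomorphic_on_imp_continuous_on[OF holQ] open_ball
          open_mapping_thm3[OF holk open_ball inj_k]])
  have "Q 0 \<in> k ` ball 0 1" using Q0 k0 by (intro rev_image_eqI[of 0]) auto
  then have U0: "0 \<in> U" by (simp add: U_def)
  have lift: "kinv (Q z) \<in> ball 0 1 \<and> k (kinv (Q z)) = Q z" if z: "z \<in> U" for z
  proof -
    obtain \<zeta> where "\<zeta> \<in> ball 0 1" "Q z = k \<zeta>" using z by (auto simp: U_def)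
    then show ?thesis using kinv by simp
  qed
  have "U \<subseteq> ball 0 1" "Q ` U \<subseteq> k ` ball 0 1" by (auto simp: U_def)
  from holomorphic_on_compose_gen[OF holomorphic_on_subset[OF holQ this(1)] holkinv this(2)]
  have holW: "(\<lambda>z. kinv (Q z)) holomorphic_on U" by (simp add: o_def)
  have W0: "kinv (Q 0) = 0" using kinv[of 0] Q0 k0 by simp
  have "ball 0 1 \<subseteq> U"
  proof (rule ball_subset_open_by_continuity[OF \<open>open U\<close> U0])
    fix R :: real assume R: "0 < R" "R < 1" "ball 0 R \<subseteq> U"
    have inner: "Q w \<in> k ` cball 0 R" if w: "w \<in> ball 0 R" for w
    proof (rule rev_image_eqI)
      show "kinv (Q w) \<in> cball 0 R"
        using norm_le_by_Jack_lemma[OF _ holomorphic_on_subset[OF holW R(3)] W0 _ w] lift R w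
        by (simp add: subset_iff)
      have "w \<in> U" using R(3) w by blast
      then show "Q w = k (kinv (Q w))" using lift by simp
    qed
    have "k ` cball 0 R \<subseteq> k ` ball 0 1" using R(2) by (intro image_mono) auto
    then have "Q z \<in> k ` ball 0 1" if "norm z = R" for z
      using Q_mem_image_cball[OF R(1,2) inner that] by blast
    then show "sphere 0 R \<subseteq> U" using R(2) by (auto simp: U_def)
  qed
  then show ?thesis by (auto simp: U_def)
qed

lemma subordinate_by_Jack_lemma: "subordinate Q k"
proof -
  obtain kinv where holkinv: "kinv holomorphic_on k ` ball 0 1"
    and "\<And>z. z \<in> ball 0 1 \<Longrightarrow> deriv k z * deriv kinv (k z) = 1"
    and kinv: "\<And>z. z \<in> ball 0 1 \<Longrightarrow> kinv (k z) = z"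
    by (rule holomorphic_has_inverse[OF holk open_ball inj_k]) blast
  have lift: "kinv (Q z) \<in> ball 0 1 \<and> k (kinv (Q z)) = Q z" if z: "z \<in> ball 0 1" for z
  proof -
    obtain \<zeta> where "\<zeta> \<in> ball 0 1" "Q z = k \<zeta>" using image_subset_by_Jack_lemma z by blast
    then show ?thesis using kinv by simp
  qed
  from holomorphic_on_compose_gen[OF holQ holkinv image_subset_by_Jack_lemma]
  have holW: "(\<lambda>z. kinv (Q z)) holomorphic_on ball 0 1" by (simp add: o_def)
  have W0: "kinv (Q 0) = 0" using kinv[of 0] Q0 k0 by simp
  show ?thesis unfolding subordinate_def
  proof (intro exI[of _ "\<lambda>z. kinv (Q z)"] conjI ballI holW W0)
    fix z :: complex assume z: "z \<in> ball 0 1"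
    then show "norm (kinv (Q z)) < 1" using lift by simp
    show "Q z = k (kinv (Q z))" using lift[OF z] by simp
  qed
qed

end

section \<open>Sectors and arguments\<close>

lemma mult_cis_eq_rcis: "u * cis x = rcis (norm u) (Arg u + x)"
proof -
  have "rcis (norm u) (Arg u) * rcis 1 x = u * cis x" by (simp only: rcis_cmod_Arg) (simp add: rcis_def)
  then show ?thesis by (simp add: rcis_mult)
qed

lemma sin_pos_iff:
  assumes "-pi < x" "x < 2 * pi"
  shows "0 < sin x \<longleftrightarrow> 0 < x \<and> x < pi"
proof
  assume pos: "0 < sin x"
  show "0 < x \<and> x < pi"
  proof (rule ccontr)
    assume "\<not> (0 < x \<and> x < pi)"
    then consider "x \<le> 0" | "pi \<le> x" by linarith
    then have "sin x \<le> 0"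
    proof cases
      case 1
      then have "0 \<le> sin (- x)" using assms by (intro sin_ge_zero) auto
      then show ?thesis by simp
    next
      case 2
      then show ?thesis using assms by (intro sin_le_zero) auto
    qed
    with pos show False by simp
  qed
qed (auto intro: sin_gt_zero)

lemma cos_pos_iff:
  assumes "-(3 * pi / 2) < x" "x < 3 * pi / 2"
  shows "0 < cos x \<longleftrightarrow> \<bar>x\<bar> < pi / 2"
proof -
  have "0 < cos x \<longleftrightarrow> 0 < sin (x + pi / 2)" by (simp add: sin_add)
  also have "\<dots> \<longleftrightarrow> 0 < x + pi / 2 \<and> x + pi / 2 < pi" using assms by (intro sin_pos_iff) auto
  finally show ?thesis by linarith
qed


definition sector :: "real \<Rightarrow> real \<Rightarrow> complex set" where
  "sector A B = {s. 0 < Im (s * cis A) \<and> Im (s * cis (- B)) < 0}"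

lemma sector_iff_Arg:
  assumes "0 < A" "0 < B" "A + B \<le> pi"
  shows "s \<in> sector A B \<longleftrightarrow> s \<noteq> 0 \<and> -A < Arg s \<and> Arg s < B"
proof (cases "s = 0")
  case False
  have Arg: "-pi < Arg s" "Arg s \<le> pi" by (rule mpi_less_Arg, rule Arg_le_pi)
  have "0 < Im (s * cis A) \<longleftrightarrow> 0 < sin (Arg s + A)"
    using False by (simp only: mult_cis_eq_rcis Im_rcis) (simp add: zero_less_mult_iff)
  also have "\<dots> \<longleftrightarrow> 0 < Arg s + A \<and> Arg s + A < pi" using Arg assms by (intro sin_pos_iff) auto
  finally have 1: "0 < Im (s * cis A) \<longleftrightarrow> 0 < Arg s + A \<and> Arg s + A < pi" .
  have "Im (s * cis (- B)) < 0 \<longleftrightarrow> 0 < sin (B - Arg s)"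
    using False by (simp only: mult_cis_eq_rcis Im_rcis) (simp add: mult_less_0_iff sin_diff sin_add mult.commute)
  also have "\<dots> \<longleftrightarrow> 0 < B - Arg s \<and> B - Arg s < pi" using Arg assms by (intro sin_pos_iff) auto
  finally have 2: "Im (s * cis (- B)) < 0 \<longleftrightarrow> 0 < B - Arg s \<and> B - Arg s < pi" .
  show ?thesis unfolding sector_def mem_Collect_eq 1 2 using False assms by auto
qed (simp add: sector_def)

lemma convex_sector: "convex (sector A B)"
proof -
  have Im: "Im (s * w) = inner (Complex (Im w) (Re w)) s" for s w :: complex
    by (simp add: inner_complex_def algebra_simps)
  show ?thesis
    unfolding sector_def Im Collect_conj_eq
    by (intro convex_Int convex_halfspace_gt convex_halfspace_lt)
qed

lemma mediant_between:
  fixes a1 b1 a2 b2 s :: real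
  assumes "0 < b1" "0 < b2" "0 \<le> s" "s \<le> 1"
  shows "min (a1 / b1) (a2 / b2) \<le> ((1 - s) * a1 + s * a2) / ((1 - s) * b1 + s * b2)
       \<and> ((1 - s) * a1 + s * a2) / ((1 - s) * b1 + s * b2) \<le> max (a1 / b1) (a2 / b2)"
proof -
  have d: "0 < (1 - s) * b1 + s * b2"
    using assms by (cases "s = 0") (auto intro: add_nonneg_pos add_pos_nonneg)
  define m where "m = min (a1 / b1) (a2 / b2)"
  define M where "M = max (a1 / b1) (a2 / b2)"
  have h: "m * b1 \<le> a1" "m * b2 \<le> a2" "a1 \<le> M * b1" "a2 \<le> M * b2"
    using assms by (auto simp: m_def M_def min_def max_def field_simps)
  have "(1 - s) * (m * b1) \<le> (1 - s) * a1" "s * (m * b2) \<le> s * a2"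
    "(1 - s) * a1 \<le> (1 - s) * (M * b1)" "s * a2 \<le> s * (M * b2)"
    using h assms by (intro mult_left_mono; simp)+
  then have "m * ((1 - s) * b1 + s * b2) \<le> (1 - s) * a1 + s * a2"
    "(1 - s) * a1 + s * a2 \<le> M * ((1 - s) * b1 + s * b2)"
    by (simp_all add: algebra_simps)
  then show ?thesis
    using d by (simp add: m_def[symmetric] M_def[symmetric] pos_le_divide_eq pos_divide_le_eq)
qed

lemma Arg_convex_comb_between:
  assumes w: "0 < Re w1" "0 < Re w2" and s: "0 \<le> s" "s \<le> 1"
  defines "w \<equiv> of_real (1 - s) * w1 + of_real s * w2"
  shows "min (Arg w1) (Arg w2) \<le> Arg w \<and> Arg w \<le> max (Arg w1) (Arg w2)"
proof -
  have Re_w: "Re w = (1 - s) * Re w1 + s * Re w2" and Im_w: "Im w = (1 - s) * Im w1 + s * Im w2"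
    by (simp_all add: w_def)
  have "0 < Re w" using w s unfolding Re_w by (cases "s = 0") (auto intro: add_nonneg_pos add_pos_nonneg)
  then have Arg_eq: "Arg w = arctan (Im w / Re w)" "Arg w1 = arctan (Im w1 / Re w1)"
    "Arg w2 = arctan (Im w2 / Re w2)" using w by (simp_all add: arg_conv_arctan)
  have "min (Im w1 / Re w1) (Im w2 / Re w2) \<le> Im w / Re w \<and> Im w / Re w \<le> max (Im w1 / Re w1) (Im w2 / Re w2)"
    unfolding Re_w Im_w by (rule mediant_between[OF w s])
  then show ?thesis
    unfolding Arg_eq by (cases "Im w1 / Re w1 \<le> Im w2 / Re w2") (auto simp: min_def max_def arctan_le_iff)
qed

lemma abs_diff_scaled_between_less:
  fixes a U X t c :: real
  assumes "\<bar>a\<bar> < c" "\<bar>a - U\<bar> < c" "min 0 U \<le> X" "X \<le> max 0 U" "0 \<le> t" "t \<le> 1"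
  shows "\<bar>a - t * X\<bar> < c"
proof -
  have "min 0 U \<le> t * X \<and> t * X \<le> max 0 U"
  proof (cases "0 \<le> U")
    case True
    then have "0 \<le> X" "X \<le> U" using assms(3,4) by auto
    then show ?thesis using True assms(5,6) mult_left_le_one_le[of X t] by auto
  next
    case False
    then have "X \<le> 0" "U \<le> X" using assms(3,4) by auto
    moreover have "t * X \<ge> 1 * X" using \<open>X \<le> 0\<close> assms(6) by (intro mult_right_mono_neg) auto
    ultimately show ?thesis using False assms(5) by (auto simp: mult_nonneg_nonpos)
  qed
  then show ?thesis using assms(1,2) by (auto simp: min_def max_def abs_less_iff split: if_splits)
qed

lemma has_integral_powr_segment:
  fixes u b :: complex
  assumes slit: "\<And>s. s \<in> {0..1} \<Longrightarrow> 1 + of_real s * (u - 1) \<notin> \<real>\<^sub>\<le>\<^sub>0"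
  shows "((\<lambda>s. b * (u - 1) * exp ((b - 1) * Ln (1 + of_real s * (u - 1))))
           has_integral exp (b * Ln u) - 1) {0..1}"
proof -
  define v where "v s = 1 + of_real s * (u - 1)" for s :: real
  have deriv: "((\<lambda>s. exp (b * Ln (v s))) has_vector_derivative
      b * (u - 1) * exp ((b - 1) * Ln (v s))) (at s within {0..1})" if s: "s \<in> {0..1}" for s
  proof -
    have v0: "v s \<noteq> 0" using slit[OF s] by (auto simp: v_def)
    have "((\<lambda>\<zeta>. exp (b * Ln (1 + \<zeta> * (u - 1)))) has_field_derivative
        exp (b * Ln (v s)) * (b * (inverse (v s) * (u - 1)))) (at (of_real s))"
      using slit[OF s] unfolding v_def by (auto intro!: derivative_eq_intros)
    moreover have "exp (b * Ln (v s)) * (b * (inverse (v s) * (u - 1)))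
        = b * (u - 1) * exp ((b - 1) * Ln (v s))"
    proof -
      have "inverse (v s) = exp (- Ln (v s))" using v0 by (simp add: exp_minus)
      moreover have "exp ((b - 1) * Ln (v s)) = exp (b * Ln (v s)) * exp (- Ln (v s))"
        by (simp add: exp_add[symmetric] algebra_simps)
      ultimately show ?thesis by (simp only: mult_ac)
    qed
    ultimately show ?thesis
      unfolding v_def by (auto intro: has_vector_derivative_real_field has_vector_derivative_at_within)
  qed
  have "v 1 = u" "v 0 = 1" by (simp_all add: v_def)
  with fundamental_theorem_of_calculus[OF _ deriv] show ?thesis by (simp add: v_def)
qed

section \<open>The conformal map of the disc onto a sector\<close>

text \<open>In the notation of the paper, \<open>\<phi> = \<pi>\<theta>/2\<close> and \<open>\<beta> = (\<alpha>\<^sub>1 + \<alpha>\<^sub>2)/2\<close>, so that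
  \<open>cis (2 * \<phi>) = c\<close>, \<open>sector_fun = G\<close> and \<open>sector_integral = G~\<close>; \<open>image_sector\<close> is the sector
  \<open>-\<pi>\<alpha>\<^sub>1/2 < arg < \<pi>\<alpha>\<^sub>2/2\<close>, onto which \<open>cayley\<close> followed by the power \<open>\<beta>\<close> maps the disc.\<close>

locale sector_map =
  fixes \<phi> \<beta> :: real
  assumes phi_bounds: "\<bar>\<phi>\<bar> < pi / 2" and beta_pos: "0 < \<beta>" and beta_le_1: "\<beta> \<le> 1"
begin

definition half_plane :: "complex set" where
  "half_plane = {u. 0 < Re (u * cis (- \<phi>))}"

definition cayley :: "complex \<Rightarrow> complex" where
  "cayley z = (1 + cis (2 * \<phi>) * z) / (1 - z)"

definition cayley_inv :: "complex \<Rightarrow> complex" where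
  "cayley_inv u = (u - 1) / (u + cis (2 * \<phi>))"

abbreviation image_sector :: "complex set" where
  "image_sector \<equiv> sector (\<beta> * (pi / 2 - \<phi>)) (\<beta> * (pi / 2 + \<phi>))"

definition sector_fun :: "complex \<Rightarrow> complex" where
  "sector_fun z = cayley z powr of_real \<beta>"

definition sector_fun_inv :: "complex \<Rightarrow> complex" where
  "sector_fun_inv s = cayley_inv (exp (Ln s / of_real \<beta>))"

lemma cos_phi_pos: "0 < cos \<phi>"
  using phi_bounds by (intro cos_gt_zero_pi) auto

lemma mem_image_sector_iff: "s \<in> image_sector \<longleftrightarrow> s \<noteq> 0 \<and> \<beta> * (\<phi> - pi / 2) < Arg s \<and> Arg s < \<beta> * (\<phi> + pi / 2)"
proof -
  have "0 < \<beta> * (pi / 2 - \<phi>)" "0 < \<beta> * (pi / 2 + \<phi>)" using phi_bounds beta_pos by auto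
  moreover have "\<beta> * (pi / 2 - \<phi>) + \<beta> * (pi / 2 + \<phi>) \<le> pi"
    using beta_le_1 by (simp add: algebra_simps)
  ultimately show ?thesis by (simp add: sector_iff_Arg algebra_simps)
qed

lemma one_in_image_sector: "1 \<in> image_sector"
proof -
  have "\<phi> - pi / 2 < 0" "0 < \<phi> + pi / 2" using phi_bounds by auto
  then show ?thesis using beta_pos by (simp add: mem_image_sector_iff mult_pos_neg)
qed

lemma mem_half_plane_iff: "u \<in> half_plane \<longleftrightarrow> u \<noteq> 0 \<and> \<bar>Arg u - \<phi>\<bar> < pi / 2"
proof (cases "u = 0")
  case False
  have "-pi < Arg u" "Arg u \<le> pi" by (rule mpi_less_Arg, rule Arg_le_pi)
  then have "0 < cos (Arg u - \<phi>) \<longleftrightarrow> \<bar>Arg u - \<phi>\<bar> < pi / 2"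
    using phi_bounds by (intro cos_pos_iff) auto
  with False show ?thesis
    unfolding half_plane_def mem_Collect_eq mult_cis_eq_rcis Re_rcis by (simp add: zero_less_mult_iff)
qed (simp add: half_plane_def)

lemma one_in_half_plane: "1 \<in> half_plane"
  using cos_phi_pos by (simp add: half_plane_def)

lemma convex_half_plane: "convex half_plane"
proof -
  have "Re (u * cis (- \<phi>)) = inner (Complex (cos \<phi>) (sin \<phi>)) u" for u
    by (simp add: inner_complex_def)
  then show ?thesis unfolding half_plane_def by (simp add: convex_halfspace_gt)
qed

lemma half_plane_not_nonpos:
  assumes "u \<in> half_plane"
  shows "u \<notin> \<real>\<^sub>\<le>\<^sub>0"
proof
  assume "u \<in> \<real>\<^sub>\<le>\<^sub>0"
  then obtain r where "u = of_real r" "r \<le> 0" by (auto simp: nonpos_Reals_def)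
  then have "Re (u * cis (- \<phi>)) \<le> 0" using cos_phi_pos by (simp add: mult_nonpos_nonneg)
  with assms show False by (simp add: half_plane_def)
qed

lemma norm_sub_one_less:
  assumes "u \<in> half_plane"
  shows "norm (u - 1) < norm (u + cis (2 * \<phi>))"
proof -
  have "(norm (u + cis (2 * \<phi>)))\<^sup>2 - (norm (u - 1))\<^sup>2
      = 2 * Re u * (cos (2 * \<phi>) + 1) + 2 * Im u * sin (2 * \<phi>)
      + ((sin (2 * \<phi>))\<^sup>2 + (cos (2 * \<phi>))\<^sup>2 - 1)"
    by (simp only: cmod_power2) (simp add: power2_eq_square algebra_simps del: sin_cos_squared_add)
  also have "\<dots> = 4 * cos \<phi> * Re (u * cis (- \<phi>))"
    unfolding sin_cos_squared_add unfolding cos_double_cos sin_double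
    by (simp add: power2_eq_square algebra_simps)
  finally have diff: "(norm (u + cis (2 * \<phi>)))\<^sup>2 - (norm (u - 1))\<^sup>2
      = 4 * cos \<phi> * Re (u * cis (- \<phi>))" .
  have "0 < 4 * cos \<phi> * Re (u * cis (- \<phi>))"
    using assms cos_phi_pos unfolding half_plane_def by simp
  with diff have "(norm (u - 1))\<^sup>2 < (norm (u + cis (2 * \<phi>)))\<^sup>2" by linarith
  then show ?thesis by (simp add: power_less_imp_less_base)
qed

lemma one_plus_cis_nonzero: "1 + cis (2 * \<phi>) \<noteq> 0"
  using norm_sub_one_less[OF one_in_half_plane] by auto

lemma cayley_in_half_plane:
  assumes "z \<in> ball 0 1"
  shows "cayley z \<in> half_plane"
proof -
  have z1: "z \<noteq> 1" using assms by auto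
  have "cayley z * cis (- \<phi>) = (cis (- \<phi>) + cis \<phi> * z) / (1 - z)"
    by (simp add: cayley_def cis_mult algebra_simps)
  then have "Re (cayley z * cis (- \<phi>))
      = cos \<phi> * (1 - ((Re z)\<^sup>2 + (Im z)\<^sup>2)) / ((Re (1 - z))\<^sup>2 + (Im (1 - z))\<^sup>2)"
    by (simp add: Re_divide power2_eq_square algebra_simps)
  moreover have "(Re (1 - z))\<^sup>2 + (Im (1 - z))\<^sup>2 > 0"
    using z1 by (simp only: cmod_power2[symmetric]) simp
  moreover have "(Re z)\<^sup>2 + (Im z)\<^sup>2 < 1"
    using assms by (simp add: cmod_power2[symmetric] power_less_one_iff)
  ultimately show ?thesis using cos_phi_pos by (simp add: half_plane_def)
qed

lemma cayley_inv_cayley: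
  assumes "z \<in> ball 0 1"
  shows "cayley_inv (cayley z) = z"
proof -
  have z1: "1 - z \<noteq> 0" using assms by auto
  have "cayley z - 1 = z * (1 + cis (2 * \<phi>)) / (1 - z)"
    "cayley z + cis (2 * \<phi>) = (1 + cis (2 * \<phi>)) / (1 - z)"
    using z1 by (simp_all add: cayley_def field_simps)
  then show ?thesis using z1 one_plus_cis_nonzero by (simp add: cayley_inv_def)
qed

lemma cayley_cayley_inv:
  assumes "u \<in> half_plane"
  shows "cayley_inv u \<in> ball 0 1" "cayley (cayley_inv u) = u"
proof -
  have lt: "norm (u - 1) < norm (u + cis (2 * \<phi>))" by (rule norm_sub_one_less[OF assms])
  then have uc: "u + cis (2 * \<phi>) \<noteq> 0" by auto
  from lt show "cayley_inv u \<in> ball 0 1" by (simp add: cayley_inv_def norm_divide divide_less_eq)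
  have "1 - cayley_inv u = (1 + cis (2 * \<phi>)) / (u + cis (2 * \<phi>))"
    "1 + cis (2 * \<phi>) * cayley_inv u = u * (1 + cis (2 * \<phi>)) / (u + cis (2 * \<phi>))"
    using uc by (simp_all add: cayley_inv_def field_simps)
  then show "cayley (cayley_inv u) = u" using uc one_plus_cis_nonzero by (simp add: cayley_def)
qed

lemma Arg_half_plane:
  assumes "u \<in> half_plane"
  shows "u \<noteq> 0" "\<phi> - pi / 2 < Arg u" "Arg u < \<phi> + pi / 2"
  using assms abs_less_iff[of "Arg u - \<phi>" "pi / 2"] unfolding mem_half_plane_iff by linarith+

lemma Ln_powr_half_plane:
  assumes u: "u \<in> half_plane"
  shows "Ln (u powr of_real \<beta>) = of_real \<beta> * Ln u"
proof -
  have u0: "u \<noteq> 0" by (rule Arg_half_plane(1)[OF u])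
  have "\<bar>Arg u\<bar> < pi" using Arg_half_plane[OF u] phi_bounds by auto
  moreover have "\<bar>\<beta> * Arg u\<bar> \<le> \<bar>Arg u\<bar>"
    using beta_pos beta_le_1 by (simp add: abs_mult mult_left_le_one_le)
  ultimately have "-pi < Im (of_real \<beta> * Ln u)" "Im (of_real \<beta> * Ln u) \<le> pi"
    using u0 by (simp_all add: Arg_eq_Im_Ln[symmetric])
  then show ?thesis using u0 by (simp add: powr_def Ln_exp)
qed

lemma Arg_powr_half_plane:
  assumes u: "u \<in> half_plane"
  shows "Arg (u powr of_real \<beta>) = \<beta> * Arg u"
proof -
  have "u \<noteq> 0" "u powr of_real \<beta> \<noteq> 0" using Arg_half_plane(1)[OF u] by (simp_all add: powr_def)
  then show ?thesis using Ln_powr_half_plane[OF u] by (simp add: Arg_eq_Im_Ln)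
qed

lemma powr_in_image_sector:
  assumes u: "u \<in> half_plane"
  shows "u powr of_real \<beta> \<in> image_sector"
proof -
  have "u powr of_real \<beta> \<noteq> 0" using Arg_half_plane(1)[OF u] by (simp add: powr_def)
  then show ?thesis
    using Arg_half_plane[OF u] beta_pos
    by (simp add: mem_image_sector_iff Arg_powr_half_plane[OF u] mult_strict_left_mono)
qed

lemma root_in_half_plane:
  assumes s: "s \<in> image_sector"
  shows "Ln (exp (Ln s / of_real \<beta>)) = Ln s / of_real \<beta>"
    and "Arg (exp (Ln s / of_real \<beta>)) = Arg s / \<beta>"
    and "exp (Ln s / of_real \<beta>) \<in> half_plane"
proof -
  have s0: "s \<noteq> 0" and bounds: "\<beta> * (\<phi> - pi / 2) < Arg s" "Arg s < \<beta> * (\<phi> + pi / 2)"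
    using s by (simp_all add: mem_image_sector_iff)
  have Im: "Im (Ln s / of_real \<beta>) = Arg s / \<beta>" using s0 by (simp add: Arg_eq_Im_Ln)
  have "\<phi> - pi / 2 < Arg s / \<beta>" and "Arg s / \<beta> < \<phi> + pi / 2"
    using bounds beta_pos by (simp_all add: pos_less_divide_eq pos_divide_less_eq mult.commute)
  then have Arg: "\<bar>Arg s / \<beta> - \<phi>\<bar> < pi / 2" by (subst abs_less_iff) linarith
  from \<open>\<phi> - pi / 2 < Arg s / \<beta>\<close> \<open>Arg s / \<beta> < \<phi> + pi / 2\<close>
  have "-pi < Im (Ln s / of_real \<beta>)" "Im (Ln s / of_real \<beta>) \<le> pi"
    using phi_bounds unfolding Im by auto
  then show "Ln (exp (Ln s / of_real \<beta>)) = Ln s / of_real \<beta>"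
    and "Arg (exp (Ln s / of_real \<beta>)) = Arg s / \<beta>"
    by (simp_all only: Ln_exp Arg_exp Im)
  with Arg show "exp (Ln s / of_real \<beta>) \<in> half_plane" by (simp add: mem_half_plane_iff)
qed

lemma powr_root:
  assumes "s \<in> image_sector"
  shows "exp (Ln s / of_real \<beta>) powr of_real \<beta> = s"
  using root_in_half_plane(1)[OF assms] assms beta_pos by (simp add: powr_def mem_image_sector_iff)

lemma image_sector_not_nonpos:
  assumes "s \<in> image_sector"
  shows "s \<notin> \<real>\<^sub>\<le>\<^sub>0"
proof
  assume "s \<in> \<real>\<^sub>\<le>\<^sub>0"
  then obtain r where r: "s = of_real r" "r \<le> 0" by (auto simp: nonpos_Reals_def)
  have "Arg s < \<beta> * (\<phi> + pi / 2)" "s \<noteq> 0" using assms by (simp_all add: mem_image_sector_iff)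
  moreover have "0 \<le> \<phi> + pi / 2" "\<phi> + pi / 2 < pi" using phi_bounds by auto
  then have "\<beta> * (\<phi> + pi / 2) < pi"
    using beta_pos beta_le_1 mult_left_le_one_le[of "\<phi> + pi / 2" \<beta>] by linarith
  ultimately show False using r by (auto simp: Arg_of_real split: if_splits)
qed

lemma holomorphic_cayley: "cayley holomorphic_on ball 0 1"
  unfolding cayley_def[abs_def] by (intro holomorphic_intros) auto

lemma sector_fun_eq: "z \<in> ball 0 1 \<Longrightarrow> sector_fun z = exp (of_real \<beta> * Ln (cayley z))"
  using Arg_half_plane(1)[OF cayley_in_half_plane] by (simp add: sector_fun_def powr_def)

lemma holomorphic_sector_fun: "sector_fun holomorphic_on ball 0 1"
proof -
  have "(\<lambda>z. exp (of_real \<beta> * Ln (cayley z))) holomorphic_on ball 0 1"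
    using holomorphic_cayley half_plane_not_nonpos[OF cayley_in_half_plane]
    by (intro holomorphic_intros) auto
  then show ?thesis by (rule holomorphic_transform) (simp add: sector_fun_eq)
qed

lemma sector_fun_0: "sector_fun 0 = 1"
  by (simp add: sector_fun_def cayley_def)

lemma sector_fun_in_image_sector: "z \<in> ball 0 1 \<Longrightarrow> sector_fun z \<in> image_sector"
  unfolding sector_fun_def by (rule powr_in_image_sector[OF cayley_in_half_plane])

lemma sector_fun_inv_sector_fun: "z \<in> ball 0 1 \<Longrightarrow> sector_fun_inv (sector_fun z) = z"
  using Ln_powr_half_plane[OF cayley_in_half_plane] beta_pos cayley_inv_cayley
  by (simp add: sector_fun_inv_def sector_fun_def Arg_half_plane(1)[OF cayley_in_half_plane])

lemma sector_fun_sector_fun_inv: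
  assumes "s \<in> image_sector"
  shows "sector_fun_inv s \<in> ball 0 1" "sector_fun (sector_fun_inv s) = s"
  using cayley_cayley_inv[OF root_in_half_plane(3)[OF assms]] powr_root[OF assms]
  by (simp_all add: sector_fun_inv_def sector_fun_def)

lemma sector_fun_inv_1: "sector_fun_inv 1 = 0"
  by (simp add: sector_fun_inv_def cayley_inv_def)

lemma holomorphic_sector_fun_inv: "sector_fun_inv holomorphic_on image_sector"
proof -
  have "exp (Ln s / of_real \<beta>) + cis (2 * \<phi>) \<noteq> 0" if "s \<in> image_sector" for s
    using norm_sub_one_less[OF root_in_half_plane(3)[OF that]] by auto
  then show ?thesis
    unfolding sector_fun_inv_def[abs_def] cayley_inv_def using image_sector_not_nonpos
    by (intro holomorphic_intros) auto
qed

lemma inj_sector_fun: "inj_on sector_fun (ball 0 1)"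
  by (rule inj_on_inverseI[of _ sector_fun_inv]) (rule sector_fun_inv_sector_fun)

lemma subordinate_sector_fun:
  assumes holp: "p holomorphic_on ball 0 1" and p0: "p 0 = 1"
    and p_sec: "\<And>z. z \<in> ball 0 1 \<Longrightarrow> p z \<in> image_sector" and z: "z \<in> ball 0 1"
  shows "\<exists>\<eta>. norm \<eta> \<le> norm z \<and> p z = sector_fun \<eta>"
proof -
  define \<omega> where "\<omega> z = sector_fun_inv (p z)" for z
  have "p ` ball 0 1 \<subseteq> image_sector" using p_sec by blast
  from holomorphic_on_compose_gen[OF holp holomorphic_sector_fun_inv this]
  have "\<omega> holomorphic_on ball 0 1" unfolding \<omega>_def[abs_def] by (simp add: o_def)
  moreover have "\<omega> 0 = 0" by (simp add: \<omega>_def p0 sector_fun_inv_1)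
  moreover have "norm (\<omega> w) < 1" if "norm w < 1" for w
    using sector_fun_sector_fun_inv(1)[OF p_sec] that by (simp add: \<omega>_def)
  ultimately have "norm (\<omega> z) \<le> norm z" using Schwarz_Lemma(1) z by simp
  moreover have "p z = sector_fun (\<omega> z)"
    using sector_fun_sector_fun_inv(2)[OF p_sec[OF z]] by (simp add: \<omega>_def)
  ultimately show ?thesis by blast
qed

lemma sector_fun_starlike:
  assumes z: "z \<in> ball 0 1" and t: "0 \<le> t" "t \<le> 1"
  shows "\<exists>\<eta>. norm \<eta> \<le> norm z \<and> sector_fun \<eta> = 1 + of_real t * (sector_fun z - 1)"
proof -
  have "1 + of_real t * (sector_fun w - 1) \<in> image_sector" if "w \<in> ball 0 1" for w
  proof -
    have "(1 - t) *\<^sub>R 1 + t *\<^sub>R sector_fun w \<in> image_sector"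
      using convexD[OF convex_sector one_in_image_sector sector_fun_in_image_sector[OF that]] t by simp
    then show ?thesis by (simp add: scaleR_conv_of_real algebra_simps)
  qed
  moreover have "(\<lambda>w. 1 + of_real t * (sector_fun w - 1)) holomorphic_on ball 0 1"
    using holomorphic_sector_fun by (intro holomorphic_intros)
  ultimately obtain \<eta> where "norm \<eta> \<le> norm z" "1 + of_real t * (sector_fun z - 1) = sector_fun \<eta>"
    using subordinate_sector_fun[of "\<lambda>w. 1 + of_real t * (sector_fun w - 1)", OF _ _ _ z]
    by (auto simp: sector_fun_0)
  then show ?thesis by auto
qed

lemma deriv_sector_fun_0: "deriv sector_fun 0 = of_real \<beta> * (1 + cis (2 * \<phi>))"
proof -
  have "(cayley has_field_derivative 1 + cis (2 * \<phi>)) (at 0)"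
    unfolding cayley_def[abs_def] by (auto intro!: derivative_eq_intros simp: power2_eq_square)
  then have "((\<lambda>z. exp (of_real \<beta> * Ln (cayley z))) has_field_derivative
      of_real \<beta> * (1 + cis (2 * \<phi>))) (at 0)"
    by (auto intro!: derivative_eq_intros simp: cayley_def)
  then have "(sector_fun has_field_derivative of_real \<beta> * (1 + cis (2 * \<phi>))) (at 0)"
    by (rule has_field_derivative_transform_within_open[where S = "ball 0 1"])
      (simp_all add: sector_fun_eq)
  then show ?thesis by (rule DERIV_imp_deriv)
qed

lemma Arg_mult_cis_half_plane:
  assumes "v \<in> half_plane"
  shows "Arg (v * cis (- \<phi>)) = Arg v - \<phi>"
proof (rule Arg_unique')
  show "0 < norm v" using Arg_half_plane(1)[OF assms] by simp
  show "Arg v - \<phi> \<in> {-pi<..pi}" using Arg_half_plane[OF assms] phi_bounds by auto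
  show "v * cis (- \<phi>) = rcis (norm v) (Arg v - \<phi>)" by (simp add: mult_cis_eq_rcis)
qed

lemma segment_in_half_plane:
  assumes "u \<in> half_plane" "0 \<le> s" "s \<le> 1"
  shows "1 + of_real s * (u - 1) \<in> half_plane"
proof -
  have "(1 - s) *\<^sub>R 1 + s *\<^sub>R u \<in> half_plane"
    using convexD[OF convex_half_plane one_in_half_plane assms(1)] assms(2,3) by simp
  then show ?thesis by (simp add: scaleR_conv_of_real algebra_simps)
qed

lemma Arg_segment_between:
  assumes u: "u \<in> half_plane" and s: "0 \<le> s" "s \<le> 1"
  shows "min 0 (Arg u) \<le> Arg (1 + of_real s * (u - 1)) \<and> Arg (1 + of_real s * (u - 1)) \<le> max 0 (Arg u)"
proof -
  let ?v = "1 + of_real s * (u - 1)"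
  have v: "?v \<in> half_plane" by (rule segment_in_half_plane[OF u s])
  have "?v * cis (- \<phi>) = of_real (1 - s) * (1 * cis (- \<phi>)) + of_real s * (u * cis (- \<phi>))"
    by (simp add: algebra_simps)
  moreover have "0 < Re (1 * cis (- \<phi>))" "0 < Re (u * cis (- \<phi>))"
    using one_in_half_plane u by (simp_all add: half_plane_def)
  ultimately have "min (Arg (1 * cis (- \<phi>))) (Arg (u * cis (- \<phi>))) \<le> Arg (?v * cis (- \<phi>))
      \<and> Arg (?v * cis (- \<phi>)) \<le> max (Arg (1 * cis (- \<phi>))) (Arg (u * cis (- \<phi>)))"
    using Arg_convex_comb_between[OF _ _ s] by simp
  then show ?thesis
    unfolding Arg_mult_cis_half_plane[OF v] Arg_mult_cis_half_plane[OF u]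
      Arg_mult_cis_half_plane[OF one_in_half_plane]
    by (auto simp: min_def max_def split: if_splits)
qed

lemma Arg_shift_bounds:
  assumes u: "u \<in> half_plane"
  defines "Y \<equiv> cis (- \<phi>) * (u + cis (2 * \<phi>))"
  shows "0 < Re Y" "\<bar>Arg Y\<bar> < pi / 2" "\<bar>Arg Y - Arg u\<bar> < pi / 2"
proof -
  have u0: "u \<noteq> 0" by (rule Arg_half_plane(1)[OF u])
  have Y: "Y = u * cis (- \<phi>) + cis \<phi>" by (simp add: Y_def algebra_simps cis_mult)
  show ReY: "0 < Re Y" using u cos_phi_pos by (simp add: Y half_plane_def)
  then have Y0: "Y \<noteq> 0" by auto
  show ArgY: "\<bar>Arg Y\<bar> < pi / 2" using Re_Ln_pos_lt_imp[OF ReY] by (simp add: Arg_eq_Im_Ln[OF Y0])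
  define Z where "Z = Y / u"
  have "Re (cis \<phi> / u) = Re (u * cis (- \<phi>)) / (norm u)\<^sup>2"
    by (simp add: Re_divide cmod_power2 algebra_simps)
  then have "0 < Re (cis \<phi> / u)" using u u0 by (simp add: half_plane_def)
  then have ReZ: "0 < Re Z" using cos_phi_pos by (simp add: Z_def Y add_divide_distrib u0)
  then have Z0: "Z \<noteq> 0" by auto
  have ArgZ: "\<bar>Arg Z\<bar> < pi / 2" using Re_Ln_pos_lt_imp[OF ReZ] by (simp add: Arg_eq_Im_Ln[OF Z0])
  have "Y = Z * u" using u0 by (simp add: Z_def)
  then have "Arg Y = Arg Z + Arg u"
    using Arg_times'[OF Z0 u0] ArgY ArgZ mpi_less_Arg[of u] Arg_le_pi[of u]
    by (auto split: if_splits)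
  then show "\<bar>Arg Y - Arg u\<bar> < pi / 2" using ArgZ by simp
qed



lemma Re_rot_mult_powr_pos:
  assumes u: "u \<in> half_plane" and s: "0 \<le> s" "s \<le> 1"
  shows "0 < Re (cis (- \<phi>) * (u + cis (2 * \<phi>)) * exp ((of_real \<beta> - 1) * Ln (1 + of_real s * (u - 1))))"
proof -
  define Y where "Y = cis (- \<phi>) * (u + cis (2 * \<phi>))"
  define v where "v = 1 + of_real s * (u - 1)"
  have Y: "0 < Re Y" "\<bar>Arg Y\<bar> < pi / 2" "\<bar>Arg Y - Arg u\<bar> < pi / 2"
    unfolding Y_def by (rule Arg_shift_bounds[OF u])+
  have "v \<noteq> 0" unfolding v_def by (rule Arg_half_plane(1)[OF segment_in_half_plane[OF u s]])
  define W where "W = Ln Y + (of_real \<beta> - 1) * Ln v"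
  have "Y \<noteq> 0" using Y(1) by auto
  then have "Y * exp ((of_real \<beta> - 1) * Ln v) = exp W" by (simp add: W_def exp_add)
  moreover have "Im W = Arg Y - (1 - \<beta>) * Arg v"
    using \<open>Y \<noteq> 0\<close> \<open>v \<noteq> 0\<close> by (simp add: W_def Arg_eq_Im_Ln algebra_simps)
  moreover have "\<bar>Arg Y - (1 - \<beta>) * Arg v\<bar> < pi / 2"
    using Y(2,3) Arg_segment_between[OF u s] beta_pos beta_le_1
    by (intro abs_diff_scaled_between_less[of _ _ "Arg u"]) (auto simp: v_def)
  then have "0 < cos (Arg Y - (1 - \<beta>) * Arg v)"
    unfolding abs_less_iff by (intro cos_gt_zero_pi) linarith+
  ultimately have "0 < Re (Y * exp ((of_real \<beta> - 1) * Ln v))" by (simp add: Re_exp)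
  then show ?thesis by (simp add: Y_def v_def)
qed

lemma Re_rot_powr_quotient_pos:
  assumes u: "u \<in> half_plane" and u1: "u \<noteq> 1"
  shows "0 < Re (cis (- \<phi>) * ((u powr of_real \<beta> - 1) * (u + cis (2 * \<phi>)) / (u - 1)))"
proof -
  define v where "v s = 1 + of_real s * (u - 1)" for s :: real
  define K where "K = cis (- \<phi>) * (u + cis (2 * \<phi>)) / (u - 1)"
  define g where "g s = of_real \<beta> * (cis (- \<phi>) * (u + cis (2 * \<phi>)) * exp ((of_real \<beta> - 1) * Ln (v s)))"
    for s
  have v: "v s \<in> half_plane" if "s \<in> {0..1}" for s
    using segment_in_half_plane[OF u] that by (simp add: v_def)
  have "((\<lambda>s. of_real \<beta> * (u - 1) * exp ((of_real \<beta> - 1) * Ln (v s)))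
      has_integral exp (of_real \<beta> * Ln u) - 1) {0..1}"
    unfolding v_def by (rule has_integral_powr_segment) (use v half_plane_not_nonpos in \<open>simp add: v_def\<close>)
  moreover have "g = (\<lambda>s. K * (of_real \<beta> * (u - 1) * exp ((of_real \<beta> - 1) * Ln (v s))))"
    using u1 by (simp add: g_def K_def fun_eq_iff)
  ultimately have "(g has_integral K * (exp (of_real \<beta> * Ln u) - 1)) {0..1}"
    by (simp add: has_integral_mult_right)
  moreover have cont: "continuous_on {0..1} g"
    unfolding g_def v_def using v half_plane_not_nonpos
    by (intro continuous_intros) (auto simp: v_def)
  moreover have "0 < Re (g s)" if "s \<in> {0..1}" for s
    using Re_rot_mult_powr_pos[OF u, of s] that beta_pos by (simp add: g_def v_def)
  ultimately have "0 < Re (K * (exp (of_real \<beta> * Ln u) - 1))"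
    using Re_integral_pos[of g] by blast
  moreover have "u powr of_real \<beta> = exp (of_real \<beta> * Ln u)"
    using Arg_half_plane(1)[OF u] by (simp add: powr_def)
  ultimately show ?thesis by (simp add: K_def mult_ac)
qed

lemma Re_rot_sector_fun_quotient_pos:
  assumes z: "z \<in> ball 0 1"
  shows "0 < Re (cis (- \<phi>) * (if z = 0 then deriv sector_fun 0 else (sector_fun z - 1) / z))"
proof (cases "z = 0")
  case True
  have "cis (- \<phi>) * (1 + cis (2 * \<phi>)) = cis (- \<phi>) + cis \<phi>"
    by (simp add: distrib_left cis_mult)
  also have "\<dots> = of_real (2 * cos \<phi>)" by (simp add: complex_eq_iff)
  finally have "cis (- \<phi>) * (1 + cis (2 * \<phi>)) = of_real (2 * cos \<phi>)" .
  then show ?thesis using True beta_pos cos_phi_pos by (simp add: deriv_sector_fun_0 mult.left_commute)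
next
  case False
  define u where "u = cayley z"
  have u: "u \<in> half_plane" using cayley_in_half_plane[OF z] by (simp add: u_def)
  have z_eq: "z = (u - 1) / (u + cis (2 * \<phi>))"
    using cayley_inv_cayley[OF z] by (simp add: u_def cayley_inv_def)
  then have "u \<noteq> 1" using False by auto
  moreover have "u + cis (2 * \<phi>) \<noteq> 0" using norm_sub_one_less[OF u] by auto
  ultimately have "(sector_fun z - 1) / z = (u powr of_real \<beta> - 1) * (u + cis (2 * \<phi>)) / (u - 1)"
    by (subst (2) z_eq) (simp add: sector_fun_def u_def)
  then show ?thesis using Re_rot_powr_quotient_pos[OF u \<open>u \<noteq> 1\<close>] False by simp
qed

definition sector_integral :: "complex \<Rightarrow> complex" where
  "sector_integral z = contour_integral (linepath 0 z) (\<lambda>t. (sector_fun t - 1) / t)"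

lemma sector_integral_has_field_derivative:
  assumes "z \<in> ball 0 1"
  shows "(sector_integral has_field_derivative
           (if z = 0 then deriv sector_fun 0 else (sector_fun z - 1) / z)) (at z)"
proof -
  have "sector_fun field_differentiable at 0"
    using holomorphic_sector_fun by (rule holomorphic_on_imp_differentiable_at) auto
  from deriv_diff[OF this field_differentiable_const]
  have eq: "deriv (\<lambda>t. sector_fun t - 1) 0 = deriv sector_fun 0" by simp
  have "(\<lambda>t. sector_fun t - 1) holomorphic_on ball 0 1"
    using holomorphic_sector_fun by (intro holomorphic_intros)
  from contour_integral_quotient_has_field_derivative[OF this _ assms]
  show ?thesis unfolding eq sector_integral_def[abs_def] by (simp add: sector_fun_0)
qed

lemma holomorphic_sector_integral: "sector_integral holomorphic_on ball 0 1"
  unfolding holomorphic_on_def field_differentiable_def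
  using sector_integral_has_field_derivative has_field_derivative_at_within by blast

lemma sector_integral_0: "sector_integral 0 = 0"
  by (simp add: sector_integral_def)

lemma deriv_sector_integral: "z \<in> ball 0 1 \<Longrightarrow> z * deriv sector_integral z = sector_fun z - 1"
  using DERIV_imp_deriv[OF sector_integral_has_field_derivative] by (simp add: sector_fun_0)

lemma inj_sector_integral: "inj_on sector_integral (ball 0 1)"
proof (rule Noshiro_Warschawski[OF convex_ball open_ball holomorphic_sector_integral])
  fix z :: complex assume "z \<in> ball 0 1"
  then show "0 < Re (cis (- \<phi>) * deriv sector_integral z)"
    using Re_rot_sector_fun_quotient_pos DERIV_imp_deriv[OF sector_integral_has_field_derivative] by simp
qed

lemma subordinate_sector_integral:
  assumes holQ: "Q holomorphic_on ball 0 1" and Q0: "Q 0 = 0"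
    and Q_sec: "\<And>z. z \<in> ball 0 1 \<Longrightarrow> 1 + z * deriv Q z \<in> image_sector"
  shows "subordinate Q sector_integral"
proof -
  have hol: "(\<lambda>z. 1 + z * deriv Q z) holomorphic_on ball 0 1"
    using holQ by (intro holomorphic_intros) auto
  have Q_sub: "\<exists>\<eta>. norm \<eta> \<le> norm z \<and> z * deriv Q z = sector_fun \<eta> - 1"
    if z: "z \<in> ball 0 1" for z
  proof -
    from subordinate_sector_fun[OF hol _ Q_sec z] obtain \<eta>
      where "norm \<eta> \<le> norm z" "1 + z * deriv Q z = sector_fun \<eta>" by auto
    then show ?thesis by (auto simp: algebra_simps)
  qed
  show ?thesis
    by (rule subordinate_by_Jack_lemma[OF holQ Q0 holomorphic_sector_integral sector_integral_0
          inj_sector_integral deriv_sector_integral Q_sub sector_fun_starlike inj_sector_fun]) auto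
qed

end

theorem corollary2p2:
  fixes a1 a2 :: real and f :: "complex \<Rightarrow> complex"
  assumes "0 < a1" "a1 \<le> 1" "0 < a2" "a2 \<le> 1"
    and "strongly_starlike_t a1 a2 f"
  shows "subordinate (\<lambda>z. if z = 0 then 1 else f z / z) (\<lambda>z. exp (Gt a1 a2 z))"
proof -
  define \<phi> where "\<phi> = pi * thetaG a1 a2 / 2"
  define \<beta> where "\<beta> = (a1 + a2) / 2"
  have "\<bar>thetaG a1 a2\<bar> < 1" using assms(1-4) by (simp add: thetaG_def abs_less_iff field_simps)
  then interpret sector_map \<phi> \<beta>
    using assms(1-4) by unfold_locales (auto simp: \<phi>_def \<beta>_def abs_mult)
  have "G a1 a2 = sector_fun"
    unfolding fun_eq_iff G_def cG_def sector_fun_def cayley_def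
    by (simp add: \<phi>_def \<beta>_def cis_conv_exp mult_ac)
  then have Gt: "Gt a1 a2 = sector_integral" unfolding fun_eq_iff Gt_def sector_integral_def by simp
  have bounds: "\<beta> * (\<phi> - pi / 2) = - (pi * a1 / 2)" "\<beta> * (\<phi> + pi / 2) = pi * a2 / 2"
    using assms(1,3) by (simp_all add: \<phi>_def \<beta>_def thetaG_def field_simps)
  have sector: "s \<in> image_sector \<longleftrightarrow> s \<noteq> 0 \<and> - (pi * a1 / 2) < Arg s \<and> Arg s < pi * a2 / 2"
    for s by (simp only: mem_image_sector_iff bounds)
  from assms(5) have holf: "f holomorphic_on ball 0 1" and f0: "f 0 = 0" and f'0: "deriv f 0 = 1"
    and f: "\<And>z. z \<in> ball 0 1 \<Longrightarrow> z \<noteq> 0 \<Longrightarrow> z * deriv f z / f z \<in> image_sector"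
    unfolding strongly_starlike_t_def sector by auto
  \<comment> \<open>if \<open>f z = 0\<close>, the quotient would be the junk value \<open>0\<close>, which is not in the sector\<close>
  have "f z \<noteq> 0" if "z \<in> ball 0 1" "z \<noteq> 0" for z using f[OF that] by (auto simp: sector)
  from holomorphic_log_of_quotient[OF holf f0 f'0 this]
  obtain Q where holQ: "Q holomorphic_on ball 0 1" and Q0: "Q 0 = 0"
    and expQ: "\<And>z. z \<in> ball 0 1 \<Longrightarrow> exp (Q z) = (if z = 0 then 1 else f z / z)"
    and Q': "\<And>z. z \<in> ball 0 1 \<Longrightarrow> z \<noteq> 0 \<Longrightarrow> 1 + z * deriv Q z = z * deriv f z / f z"
    by blast
  have "1 + z * deriv Q z \<in> image_sector" if "z \<in> ball 0 1" for z
    using f[OF that] Q'[OF that] one_in_image_sector by (cases "z = 0") auto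
  with holQ Q0 have "subordinate Q sector_integral" by (rule subordinate_sector_integral)
  then show ?thesis unfolding Gt by (rule subordinate_compose) (simp add: expQ)
qed

end
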